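(* Let $\epsilon>0$, $\delta\ge0$, $n\ge1$, $\theta_0\in(0,1)$, set $b=e^{-\epsilon}$ and $q=\frac{2\delta b}{1-b+2\delta b}$, let $X\sim\mathrm{Binom}(n,\theta)$ with $\theta$ unknown, and let $Z\mid X\sim\mathrm{Tulap}(X,b,q)$. Define $p(\theta_0,Z):=P(X'+N\ge Z\mid Z)$, where the probability is over independent $X'\sim\mathrm{Binom}(n,\theta_0)$ and $N\sim\mathrm{Tulap}(0,b,q)$ (independent of $Z$). Then: (1) $p(\theta_0,Z)$ is a $p$-value for $H_0:\theta\le\theta_0$ versus $H_1:\theta>\theta_0$; (2) for every $0<\alpha<1$, the test $\phi^*_x=P_{Z\mid X\sim\mathrm{Tulap}(X,b,q)}\big(p(\theta_0,Z)\le\alpha\mid X=x\big)$ is the uniformly most powerful level-$\alpha$ test for $H_0:\theta\le\theta_0$ versus $H_1:\theta>\theta_0$ among $\mathscr D^n_{\epsilon,\delta}$; (3) $p(\theta_0,Z)=\sum_{x=0}^n F_N(x-Z)\binom nx\theta_0^x(1-\theta_0)^{n-x}$, where $F_N$ is the cdf of $\mathrm{Tulap}(0,b,q)$.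
   Context: A $p$-value for $H_0:\theta\in\Theta_0$ based on data $Z$ is a random variable $p(Z)\in[0,1]$ such that for every $\theta\in\Theta_0$ and every $0<\alpha<1$, $P_\theta(p(Z)\le\alpha)\le\alpha$. Nearest integer function: $[t]$ is the integer nearest to $t$, with $[z+1/2]$ ($z\in\mathbb{Z}$) defined as the nearest even integer. Tulap distribution: for $m\in\mathbb{R}$, $b\in(0,1)$, $q\in[0,1)$, $N_0\sim\mathrm{Tulap}(m,b,0)$ has cdf $F_{N_0}(x)=\frac{b^{-[x-m]}}{1+b}\big(b+(x-m-[x-m]+\tfrac12)(1-b)\big)$ for $x\leq [m]$ and $F_{N_0}(x)=1-\frac{b^{[x-m]}}{1+b}\big(b+([x-m]-(x-m)+\tfrac12)(1-b)\big)$ for $x>[m]$; and $N\sim \mathrm{Tulap}(m,b,q)$ has cdf $F_N(x)=\frac{F_{N_0}(x)-q/2}{1-q}\,I\{q/2\leq F_{N_0}(x)\leq 1-q/2\}+I\{F_{N_0}(x)>1-q/2\}$. A test is a function $\phi:\{0,\dots,n\}\to[0,1]$ (probability of rejecting when $X=x$). $\mathscr D^n_{\epsilon,\delta}$ is the set of tests $\phi$ such that for all $x\in\{0,\dots,n-1\}$: $\phi_x\le e^\epsilon\phi_{x+1}+\delta$, $\phi_{x+1}\le e^\epsilon\phi_x+\delta$, $1-\phi_x\le e^\epsilon(1-\phi_{x+1})+\delta$, $1-\phi_{x+1}\le e^\epsilon(1-\phi_x)+\delta$. A test $\phi^*\in\Phi$ is uniformly most powerful at level $\alpha$ among $\Phi$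 if $\sup_{\theta\in\Theta_0}\mathbb{E}_\theta\phi^*\le\alpha$ and for every $\phi\in\Phi$ with $\sup_{\theta\in\Theta_0}\mathbb{E}_\theta\phi\le\alpha$, $\mathbb{E}_\theta\phi^*\ge\mathbb{E}_\theta\phi$ for all $\theta$ in the alternative. *)

theory Defs
  imports "HOL-Probability.Probability"
begin

definition nint :: "real \<Rightarrow> int" where
  "nint t = (let k = \<lfloor>t\<rfloor>; r = t - of_int k in
     if r < 1/2 then k else if r > 1/2 then k + 1
     else (if even k then k else k + 1))"

definition tulap0_cdf :: "real \<Rightarrow> real \<Rightarrow> real \<Rightarrow> real" where
  "tulap0_cdf m b x =
     (if x \<le> of_int (nint m) then
        b powr (- of_int (nint (x - m))) / (1 + b) *
          (b + (x - m - of_int (nint (x - m)) + 1/2) * (1 - b))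
      else
        1 - b powr (of_int (nint (x - m))) / (1 + b) *
          (b + (of_int (nint (x - m)) - (x - m) + 1/2) * (1 - b)))"

definition tulap_cdf :: "real \<Rightarrow> real \<Rightarrow> real \<Rightarrow> real \<Rightarrow> real" where
  "tulap_cdf m b q x =
     (let F0 = tulap0_cdf m b x in
        (if q/2 \<le> F0 \<and> F0 \<le> 1 - q/2 then (F0 - q/2) / (1 - q) else 0)
        + (if F0 > 1 - q/2 then 1 else 0))"

definition tulap_measure :: "real \<Rightarrow> real \<Rightarrow> real \<Rightarrow> real measure" where
  "tulap_measure m b q = interval_measure (tulap_cdf m b q)"

definition Z_prob :: "nat \<Rightarrow> real \<Rightarrow> real \<Rightarrow> real \<Rightarrow> real set \<Rightarrow> real" where
  "Z_prob n \<theta> b q A =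
     (\<Sum>x\<le>n. pmf (binomial_pmf n \<theta>) x * measure (tulap_measure (real x) b q) A)"

definition tulap_pvalue :: "nat \<Rightarrow> real \<Rightarrow> real \<Rightarrow> real \<Rightarrow> real \<Rightarrow> real" where
  "tulap_pvalue n \<theta>0 b q z =
     measure (measure_pmf (binomial_pmf n \<theta>0) \<Otimes>\<^sub>M tulap_measure 0 b q)
       {(x, t). real x + t \<ge> z}"

definition is_pvalue :: "nat \<Rightarrow> real \<Rightarrow> real \<Rightarrow> real set \<Rightarrow> (real \<Rightarrow> real) \<Rightarrow> bool" where
  "is_pvalue n b q \<Theta>0 p \<longleftrightarrow>
     (\<forall>z. 0 \<le> p z \<and> p z \<le> 1) \<and>
     (\<forall>\<theta>\<in>\<Theta>0. \<forall>\<alpha>. 0 < \<alpha> \<and> \<alpha> < 1 \<longrightarrow> Z_prob n \<theta> b q {z. p z \<le> \<alpha>} \<le> \<alpha>)"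

definition is_test :: "nat \<Rightarrow> (nat \<Rightarrow> real) \<Rightarrow> bool" where
  "is_test n \<phi> \<longleftrightarrow> (\<forall>x\<le>n. 0 \<le> \<phi> x \<and> \<phi> x \<le> 1)"

definition power :: "nat \<Rightarrow> real \<Rightarrow> (nat \<Rightarrow> real) \<Rightarrow> real" where
  "power n \<theta> \<phi> = (\<Sum>x\<le>n. pmf (binomial_pmf n \<theta>) x * \<phi> x)"

definition DP_tests :: "nat \<Rightarrow> real \<Rightarrow> real \<Rightarrow> (nat \<Rightarrow> real) set" where
  "DP_tests n \<epsilon> \<delta> = {\<phi>. is_test n \<phi> \<and> (\<forall>x<n.
       \<phi> x \<le> exp \<epsilon> * \<phi> (x+1) + \<delta> \<and>
       \<phi> (x+1) \<le> exp \<epsilon> * \<phi> x + \<delta> \<and>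
       1 - \<phi> x \<le> exp \<epsilon> * (1 - \<phi> (x+1)) + \<delta> \<and>
       1 - \<phi> (x+1) \<le> exp \<epsilon> * (1 - \<phi> x) + \<delta>)}"

definition is_UMP :: "nat \<Rightarrow> real set \<Rightarrow> real set \<Rightarrow> real \<Rightarrow> (nat \<Rightarrow> real) set \<Rightarrow> (nat \<Rightarrow> real) \<Rightarrow> bool" where
  "is_UMP n \<Theta>0 \<Theta>1 \<alpha> \<Phi> \<phi>s \<longleftrightarrow>
     \<phi>s \<in> \<Phi> \<and> (\<forall>\<theta>\<in>\<Theta>0. power n \<theta> \<phi>s \<le> \<alpha>) \<and>
     (\<forall>\<phi>\<in>\<Phi>. (\<forall>\<theta>\<in>\<Theta>0. power n \<theta> \<phi> \<le> \<alpha>) \<longrightarrow>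
        (\<forall>\<theta>\<in>\<Theta>1. power n \<theta> \<phi>s \<ge> power n \<theta> \<phi>))"

end

theory Submission
  imports Defs "HOL-Real_Asymp.Real_Asymp"
begin

text \<open>
  Write F for the cdf of Tulap(0, b, q) and b = exp (- eps). F is an affine image of the
  Tulap(0, b, 0) cdf clamped to [0, 1], and from t to t + 1 it grows as fast as the
  (eps, delta)-DP constraints on a test allow: F (t + 1) = min 1 (min (F t / b + delta)
  (1 - b * (1 - F t - delta))) whenever F t > 0, and \<open>\<le>\<close> always. Consequently the test
  psi x = F (x - c) is (eps, delta)-DP, and a DP test phi with phi x < psi x at some x stays
  below psi from x on, so phi - psi changes sign at most once. The binomial family has a
  monotone likelihood ratio, so such a single crossing transfers the inequality of the
  sizes at theta0 to the powers at every theta1 > theta0, while monotonicity of psi bounds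
  the size on [0, theta0] by the size at theta0 (Karlin--Rubin).

  The p-value p z = \<Sum>x\<le>n. F (x - z) * pmf (binomial_pmf n theta0) x is continuous and
  decreasing from 1 to 0, so {z. p z \<le> alpha} = {c..} for a c with p c = alpha; rejecting
  when p (Z) \<le> alpha therefore is exactly the test psi, whose size at theta0 is alpha.
\<close>

section \<open>The Tulap distribution function\<close>

lemma nint_of_int [simp]: "nint (of_int k) = k"
  by (simp add: nint_def)

lemma nint_zero [simp]: "nint 0 = 0"
  by (simp add: nint_def)

lemma nint_bounds: "of_int (nint t) - 1/2 \<le> t" "t \<le> of_int (nint t) + 1/2"
  unfolding nint_def Let_def by (auto split: if_splits) linarith+

lemma min_divide_one_minus_mult:
  fixes b g :: real
  assumes "0 < b" "b < 1"
  shows "g \<le> b / (1 + b) \<Longrightarrow> min (g / b) (1 - b * (1 - g)) = g / b"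
    and "b / (1 + b) \<le> g \<Longrightarrow> min (g / b) (1 - b * (1 - g)) = 1 - b * (1 - g)"
proof -
  have "g / b - (1 - b * (1 - g)) = (g * (1 + b) - b) * ((1 - b) / b)"
    using assms by (simp add: field_simps)
  moreover have "g \<le> b / (1 + b) \<longleftrightarrow> g * (1 + b) - b \<le> 0"
    using assms by (simp add: le_divide_eq)
  moreover have "b / (1 + b) \<le> g \<longleftrightarrow> 0 \<le> g * (1 + b) - b"
    using assms by (simp add: divide_le_eq)
  moreover have "(1 - b) / b > 0"
    using assms by simp
  ultimately show "g \<le> b / (1 + b) \<Longrightarrow> min (g / b) (1 - b * (1 - g)) = g / b"
    and "b / (1 + b) \<le> g \<Longrightarrow> min (g / b) (1 - b * (1 - g)) = 1 - b * (1 - g)"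
    by (smt (verit) mult_nonneg_nonneg mult_nonpos_nonneg)+
qed

(* The piecewise linear interpolation of k \<mapsto> b powr (1 - k) / (1 + b), k \<in> \<int>;
   the Tulap(0,b,0) cdf at t is geom_interp b (t + 1/2) for t \<le> 1/2. *)
definition geom_interp :: "real \<Rightarrow> real \<Rightarrow> real" where
  "geom_interp b w = b powr (- of_int \<lfloor>w\<rfloor>) / (1 + b) * (b + (w - of_int \<lfloor>w\<rfloor>) * (1 - b))"

context
  fixes b :: real
  assumes b: "0 < b" "b < 1"
begin

lemma geom_interp_eq:
  assumes "of_int k \<le> w" "w \<le> of_int k + 1"
  shows "geom_interp b w = b powr (- of_int k) / (1 + b) * (b + (w - of_int k) * (1 - b))"
proof (cases "w = of_int k + 1")
  case True
  have "b powr (- of_int k) = b powr (- of_int (k + 1)) * b"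
    using b by (simp add: powr_diff)
  then show ?thesis using True by (simp add: geom_interp_def algebra_simps)
next
  case False
  then have "\<lfloor>w\<rfloor> = k" using assms by linarith
  then show ?thesis by (simp add: geom_interp_def)
qed

lemma geom_interp_add_one: "geom_interp b (w + 1) = geom_interp b w / b"
proof -
  have "b powr (- of_int (\<lfloor>w\<rfloor> + 1)) = b powr (- of_int \<lfloor>w\<rfloor>) / b"
    using b by (simp add: powr_diff)
  then show ?thesis by (simp add: geom_interp_def)
qed

lemma geom_interp_half: "geom_interp b (1/2) = 1/2"
  using b by (simp add: geom_interp_def field_simps)

lemma geom_interp_zero: "geom_interp b 0 = b / (1 + b)"
  using b by (simp add: geom_interp_def)

lemma geom_interp_nonneg: "0 \<le> geom_interp b w"
  using b by (simp add: geom_interp_def)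

lemma geom_interp_le_powr: "geom_interp b w \<le> b powr (- w)"
proof -
  have "(w - of_int \<lfloor>w\<rfloor>) * (1 - b) \<le> 1"
    using b by (intro mult_le_one) linarith+
  then have "geom_interp b w \<le> b powr (- of_int \<lfloor>w\<rfloor>)"
    using b by (simp add: geom_interp_def divide_le_eq mult_left_le)
  also have "\<dots> \<le> b powr (- w)"
    using b by (intro powr_mono') auto
  finally show ?thesis .
qed

lemma geom_interp_mono_cell:
  assumes "of_int k \<le> w1" "w1 \<le> w2" "w2 \<le> of_int k + 1"
  shows "geom_interp b w1 \<le> geom_interp b w2"
  using assms b
  by (simp add: geom_interp_eq[of k] divide_right_mono mult_left_mono mult_right_mono)

lemma geom_interp_mono:
  assumes "w1 \<le> w2"
  shows "geom_interp b w1 \<le> geom_interp b w2"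
proof (cases "\<lfloor>w1\<rfloor> = \<lfloor>w2\<rfloor>")
  case True
  then show ?thesis
    using assms by (intro geom_interp_mono_cell[of "\<lfloor>w1\<rfloor>"]) linarith+
next
  case False
  define m1 m2 where "m1 = \<lfloor>w1\<rfloor>" and "m2 = \<lfloor>w2\<rfloor>"
  have "m1 \<le> m2" unfolding m1_def m2_def using assms by (rule floor_mono)
  with False have "m1 + 1 \<le> m2" unfolding m1_def m2_def by linarith
  have "geom_interp b w1 \<le> geom_interp b (of_int (m1 + 1))"
    by (intro geom_interp_mono_cell[of m1]) (simp_all add: m1_def; linarith)+
  also have "\<dots> \<le> geom_interp b (of_int m2)"
    using b \<open>m1 + 1 \<le> m2\<close> by (simp add: geom_interp_def divide_right_mono powr_mono')
  also have "\<dots> \<le> geom_interp b w2"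
    by (intro geom_interp_mono_cell[of m2]) (simp_all add: m2_def; linarith)+
  finally show ?thesis .
qed

lemma isCont_geom_interp: "isCont (geom_interp b) w0"
proof -
  define m where "m = \<lfloor>w0\<rfloor>"
  define cell where
    "cell k w = b powr (- of_int k) / (1 + b) * (b + (w - of_int k) * (1 - b))" for k w
  define g where "g w = (if w \<le> of_int m then cell (m - 1) w else cell m w)" for w
  have cell_eq: "geom_interp b w = cell k w" if "of_int k \<le> w" "w \<le> of_int k + 1" for k w
    unfolding cell_def using that by (rule geom_interp_eq)
  have "cell (m - 1) (of_int m) = cell m (of_int m)"
    using b by (simp add: cell_def powr_diff powr_minus_divide)
  then have "continuous_on UNIV g"
    unfolding g_def cell_def by (intro continuous_on_cases_1 continuous_intros) auto
  then have "isCont g w0"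
    by (simp add: continuous_on_eq_continuous_at)
  moreover have "\<forall>\<^sub>F w in nhds w0. w \<in> {of_int m - 1 <..< of_int m + 1}"
    unfolding m_def by (intro eventually_nhds_in_open) (simp_all, linarith)
  then have "\<forall>\<^sub>F w in nhds w0. geom_interp b w = g w"
    by eventually_elim (simp add: g_def cell_eq)
  ultimately show ?thesis
    using isCont_cong by blast
qed

lemma geom_interp_tendsto_at_bot: "(geom_interp b \<longlongrightarrow> 0) at_bot"
proof (rule tendsto_sandwich)
  show "\<forall>\<^sub>F w in at_bot. 0 \<le> geom_interp b w"
    by (simp add: geom_interp_nonneg)
  show "\<forall>\<^sub>F w in at_bot. geom_interp b w \<le> b powr (- w)"
    by (simp add: geom_interp_le_powr)
  show "((\<lambda>w. b powr (- w)) \<longlongrightarrow> 0) at_bot"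
    using b by real_asymp
qed simp

lemma tulap0_cdf_eq:
  "tulap0_cdf 0 b x = (if x \<le> 0 then geom_interp b (x + 1/2) else 1 - geom_interp b (1/2 - x))"
proof -
  define k where "k = nint x"
  have k: "of_int k - 1/2 \<le> x" "x \<le> of_int k + 1/2"
    unfolding k_def by (rule nint_bounds)+
  have "geom_interp b (x + 1/2)
      = b powr (- of_int k) / (1 + b) * (b + (x - of_int k + 1/2) * (1 - b))"
    using k by (subst geom_interp_eq[of k]) (simp_all add: algebra_simps)
  moreover have "geom_interp b (1/2 - x)
      = b powr (of_int k) / (1 + b) * (b + (of_int k - x + 1/2) * (1 - b))"
    using k by (subst geom_interp_eq[of "- k"]) (simp_all add: algebra_simps)
  ultimately show ?thesis
    by (simp add: tulap0_cdf_def k_def)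
qed

lemma tulap0_cdf_low:
  assumes "x \<le> 1/2"
  shows "tulap0_cdf 0 b x = geom_interp b (x + 1/2)"
proof (cases "x \<le> 0")
  case False
  have "geom_interp b (1/2 - x) + geom_interp b (x + 1/2)
      = (b + (1/2 - x) * (1 - b) + (b + (x + 1/2) * (1 - b))) / (1 + b)"
    using assms False b by (simp add: geom_interp_eq[of 0] add_divide_distrib)
  also have "\<dots> = 1"
    using b by (simp add: field_simps)
  finally show ?thesis
    using False
    by (simp add: tulap0_cdf_eq)
qed (simp add: tulap0_cdf_eq)

lemma tulap0_cdf_minus: "tulap0_cdf 0 b (- x) = 1 - tulap0_cdf 0 b x"
  using b by (simp add: tulap0_cdf_eq geom_interp_half algebra_simps)

lemma tulap0_cdf_mono:
  assumes "s \<le> t"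
  shows "tulap0_cdf 0 b s \<le> tulap0_cdf 0 b t"
proof -
  have "geom_interp b w \<le> 1/2" if "w \<le> 1/2" for w
    using geom_interp_mono[OF that] by (simp add: geom_interp_half)
  from this[of "s + 1/2"] this[of "1/2 - t"] show ?thesis
    using assms by (auto simp: tulap0_cdf_eq intro!: geom_interp_mono)
qed

lemma continuous_tulap0_cdf: "continuous_on UNIV (tulap0_cdf 0 b)"
proof -
  have g: "continuous_on A (geom_interp b)" for A
    by (simp add: continuous_at_imp_continuous_on isCont_geom_interp)
  have "continuous_on UNIV
      (\<lambda>x. if x \<le> 0 then geom_interp b (x + 1/2) else 1 - geom_interp b (1/2 - x))"
  proof (rule continuous_on_cases_1)
    show "continuous_on {t \<in> UNIV. t \<le> 0} (\<lambda>x. geom_interp b (x + 1/2))"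
      by (intro continuous_on_compose2[OF g] continuous_intros) auto
    show "continuous_on {t \<in> UNIV. 0 \<le> t} (\<lambda>x. 1 - geom_interp b (1/2 - x))"
      by (intro continuous_on_diff continuous_on_const continuous_on_compose2[OF g]
          continuous_intros) auto
  qed (simp add: geom_interp_half)
  then show ?thesis
    by (simp add: tulap0_cdf_eq)
qed

lemma tulap0_cdf_tendsto_at_bot: "(tulap0_cdf 0 b \<longlongrightarrow> 0) at_bot"
proof -
  have "((\<lambda>x. geom_interp b (x + 1/2)) \<longlongrightarrow> 0) at_bot"
    by (rule filterlim_compose[OF geom_interp_tendsto_at_bot]) real_asymp
  moreover have "\<forall>\<^sub>F x in at_bot. geom_interp b (x + 1/2) = tulap0_cdf 0 b x"
    unfolding eventually_at_bot_linorder by (auto simp: tulap0_cdf_eq)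
  ultimately show ?thesis
    by (rule tendsto_cong[THEN iffD1, rotated])
qed

lemma tulap0_cdf_add_one_low:
  assumes "t \<le> -1/2"
  shows "tulap0_cdf 0 b (t + 1) = tulap0_cdf 0 b t / b"
  using assms by (simp add: tulap0_cdf_low geom_interp_add_one[symmetric] add.assoc)

lemma tulap0_cdf_add_one:
  "tulap0_cdf 0 b (t + 1) = min (tulap0_cdf 0 b t / b) (1 - b * (1 - tulap0_cdf 0 b t))"
proof -
  let ?G = "tulap0_cdf 0 b"
  have G_half: "?G (-1/2) = b / (1 + b)"
    by (simp add: tulap0_cdf_low geom_interp_zero)
  show ?thesis
  proof (cases "t \<le> -1/2")
    case True
    then have "?G t \<le> b / (1 + b)"
      using tulap0_cdf_mono G_half by metis
    with True show ?thesis
      using b by (simp add: min_divide_one_minus_mult tulap0_cdf_add_one_low)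
  next
    case False
    then have "b / (1 + b) \<le> ?G t"
      using tulap0_cdf_mono G_half by (metis linorder_linear)
    moreover have "?G (- t) = ?G (- (t + 1)) / b"
      using tulap0_cdf_add_one_low[of "- t - 1"] False by simp
    then have "1 - ?G t = (1 - ?G (t + 1)) / b"
      unfolding tulap0_cdf_minus .
    then have "?G (t + 1) = 1 - b * (1 - ?G t)"
      using b by (simp add: field_simps)
    ultimately show ?thesis
      using b by (simp add: min_divide_one_minus_mult)
  qed
qed

end

lemma tulap0_cdf_of_int_shift: "tulap0_cdf (of_int j) b x = tulap0_cdf 0 b (x - of_int j)"
  by (simp add: tulap0_cdf_def algebra_simps)

lemma tulap_cdf_of_int_shift: "tulap_cdf (of_int j) b q x = tulap_cdf 0 b q (x - of_int j)"
  by (simp add: tulap_cdf_def tulap0_cdf_of_int_shift)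

definition clamp01 :: "real \<Rightarrow> real" where
  "clamp01 y = max 0 (min 1 y)"

lemma clamp01_mono: "x \<le> y \<Longrightarrow> clamp01 x \<le> clamp01 y"
  by (simp add: clamp01_def)

lemma tulap_cdf_eq_clamp01:
  assumes "0 \<le> q" "q < 1"
  shows "tulap_cdf m b q x = clamp01 ((tulap0_cdf m b x - q/2) / (1 - q))"
  using assms
  by (auto simp: tulap_cdf_def clamp01_def Let_def divide_le_eq le_divide_eq max_def min_def)

(* The largest value phi (x + 1) compatible with the (eps, delta)-DP constraints on a test phi
   with phi x = u, where b = exp (- eps). *)
definition dp_bound :: "real \<Rightarrow> real \<Rightarrow> real \<Rightarrow> real" where
  "dp_bound b \<delta> u = min 1 (min (u / b + \<delta>) (1 - b * (1 - u - \<delta>)))"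

lemma dp_bound_mono: "0 < b \<Longrightarrow> u \<le> v \<Longrightarrow> dp_bound b \<delta> u \<le> dp_bound b \<delta> v"
  unfolding dp_bound_def
  by (intro min.mono order.refl add_right_mono divide_right_mono diff_left_mono mult_left_mono) auto

(* step is the one-step recursion of (G - q/2) / (1 - q), G the Tulap(0,b,0) cdf, with
   d = q (1 - b) / (2 b (1 - q)); clamping turns it into the DP bound. *)
lemma clamp01_dp_step:
  fixes b d a :: real
  assumes b: "0 < b" "b < 1" and d: "0 \<le> d"
  defines "step \<equiv> \<lambda>y. min (y / b + d) (1 - b * (1 - y - d))"
  shows clamp01_dp_step_eq: "0 \<le> a \<Longrightarrow> clamp01 (step a) = dp_bound b d (clamp01 a)"
    and clamp01_dp_step_le: "clamp01 (step a) \<le> dp_bound b d (clamp01 a)"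
proof -
  have eq: "clamp01 (step a) = dp_bound b d (clamp01 a)" if "0 \<le> a" for a
  proof (cases "a \<le> 1")
    case True
    have "b * (1 - a - d) \<le> b"
      using b d that by (intro mult_left_le) auto
    then have "0 \<le> 1 - b * (1 - a - d)"
      using b by linarith
    then have "0 \<le> step a"
      using b d that by (simp add: step_def)
    with that True show ?thesis
      by (simp add: clamp01_def dp_bound_def step_def)
  next
    case False
    have "1 \<le> a / b" "1 \<le> 1 / b"
      using b False by (simp_all add: le_divide_eq)
    moreover have "b * (1 - a - d) \<le> 0"
      using b d False by (intro mult_nonneg_nonpos) auto
    ultimately have "1 \<le> a / b + d" "1 \<le> 1 - b * (1 - a - d)" "1 \<le> 1 / b + d"
      using d by linarith+
    moreover have "1 \<le> 1 + b * d"
      using b d by simp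
    ultimately have "1 \<le> step a" "1 \<le> 1 / b + d" "1 \<le> 1 + b * d"
      by (simp_all add: step_def)
    with False show ?thesis
      by (simp add: clamp01_def dp_bound_def min_def)
  qed
  then show "0 \<le> a \<Longrightarrow> clamp01 (step a) = dp_bound b d (clamp01 a)" .
  have "step a \<le> step (max a 0)"
    unfolding step_def using b
    by (intro min.mono add_right_mono divide_right_mono diff_left_mono mult_left_mono) auto
  then have "clamp01 (step a) \<le> clamp01 (step (max a 0))"
    by (rule clamp01_mono)
  also have "\<dots> = dp_bound b d (clamp01 (max a 0))"
    by (rule eq) simp
  also have "clamp01 (max a 0) = clamp01 a"
    by (simp add: clamp01_def)
  finally show "clamp01 (step a) \<le> dp_bound b d (clamp01 a)" .
qed

section \<open>Monotone likelihood ratio of the binomial family\<close>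

lemma set_pmf_binomial_subset: "0 \<le> p \<Longrightarrow> p \<le> 1 \<Longrightarrow> set_pmf (binomial_pmf n p) \<subseteq> {..n}"
  by (auto simp: set_pmf_binomial_eq split: if_splits)

lemma sum_single_crossing_nonneg:
  fixes d r :: "nat \<Rightarrow> real"
  assumes crossing: "\<And>x y. x \<le> y \<Longrightarrow> y \<le> n \<Longrightarrow> 0 < d x \<Longrightarrow> 0 \<le> d y"
    and mono: "\<And>x y. x \<le> y \<Longrightarrow> y \<le> n \<Longrightarrow> r x \<le> r y"
    and nonneg: "\<And>x. x \<le> n \<Longrightarrow> 0 \<le> r x"
    and sum: "0 \<le> (\<Sum>x\<le>n. d x)"
  shows "0 \<le> (\<Sum>x\<le>n. d x * r x)"
proof -
  obtain R where "0 \<le> R" and R: "\<And>x. x \<le> n \<Longrightarrow> d x * R \<le> d x * r x"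
  proof (cases "\<exists>x\<le>n. 0 < d x")
    case True
    define x0 where "x0 = (LEAST x. x \<le> n \<and> 0 < d x)"
    have x0: "x0 \<le> n" "0 < d x0"
      using LeastI_ex[of "\<lambda>x. x \<le> n \<and> 0 < d x"] True by (auto simp: x0_def)
    show thesis
    proof (rule that[of "r x0"])
      show "0 \<le> r x0"
        using nonneg x0 by simp
      fix x
      assume "x \<le> n"
      show "d x * r x0 \<le> d x * r x"
      proof (cases "x < x0")
        case True
        then have "d x \<le> 0"
          using not_less_Least[of x "\<lambda>x. x \<le> n \<and> 0 < d x"] \<open>x \<le> n\<close> by (auto simp: x0_def)
        with True x0 show ?thesis
          by (simp add: mult_left_mono_neg mono)
      next
        case False
        then have "0 \<le> d x"
          using crossing[of x0 x] x0 \<open>x \<le> n\<close> by simp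
        with False \<open>x \<le> n\<close> show ?thesis
          by (simp add: mult_left_mono mono)
      qed
    qed
  next
    case False
    show thesis
    proof (rule that[of "r n"])
      show "0 \<le> r n"
        using nonneg by simp
      fix x
      assume "x \<le> n"
      with False show "d x * r n \<le> d x * r x"
        by (simp add: mult_left_mono_neg mono not_less)
    qed
  qed
  have "0 \<le> R * (\<Sum>x\<le>n. d x)"
    using \<open>0 \<le> R\<close> sum by simp
  also have "\<dots> = (\<Sum>x\<le>n. d x * R)"
    by (simp add: sum_distrib_left mult.commute)
  also have "\<dots> \<le> (\<Sum>x\<le>n. d x * r x)"
    using R by (intro sum_mono) simp
  finally show ?thesis .
qed

(* The monotone likelihood ratio property, multiplied out so that it also covers t = 0. *)
lemma binomial_pmf_tp2:
  assumes t: "0 \<le> t" "t \<le> t'" "t' \<le> 1" and xy: "x \<le> y" "y \<le> n"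
  shows "pmf (binomial_pmf n t') x * pmf (binomial_pmf n t) y
    \<le> pmf (binomial_pmf n t') y * pmf (binomial_pmf n t) x"
proof -
  obtain k m where km: "y = x + k" "n = x + k + m"
    using xy by (metis le_iff_add)
  define K where
    "K = real (n choose x) * real (n choose y) * t' ^ x * t ^ x * (1 - t') ^ m * (1 - t) ^ m"
  have "0 \<le> K"
    using t by (simp add: K_def)
  have lhs: "pmf (binomial_pmf n t') x * pmf (binomial_pmf n t) y = K * ((1 - t') ^ k * t ^ k)"
    using t unfolding K_def km by (simp add: power_add mult_ac)
  have rhs: "pmf (binomial_pmf n t') y * pmf (binomial_pmf n t) x = K * (t' ^ k * (1 - t) ^ k)"
    using t unfolding K_def km by (simp add: power_add mult_ac)
  have "(1 - t') * t \<le> t' * (1 - t)"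
    using t by (simp add: algebra_simps)
  then have "((1 - t') * t) ^ k \<le> (t' * (1 - t)) ^ k"
    using t by (intro power_mono) auto
  then show ?thesis
    unfolding lhs rhs power_mult_distrib[symmetric] using \<open>0 \<le> K\<close> by (rule mult_left_mono)
qed

lemma test_power_mono:
  fixes \<psi> :: "nat \<Rightarrow> real"
  assumes t: "0 \<le> t" "t \<le> t'" "t' \<le> 1"
    and mono: "\<And>x y. x \<le> y \<Longrightarrow> y \<le> n \<Longrightarrow> \<psi> x \<le> \<psi> y"
    and nonneg: "\<And>x. x \<le> n \<Longrightarrow> 0 \<le> \<psi> x"
  shows "power n t \<psi> \<le> power n t' \<psi>"
proof -
  let ?p = "\<lambda>t x. pmf (binomial_pmf n t) x"
  have "0 \<le> (\<Sum>x\<le>n. (?p t' x - ?p t x) * \<psi> x)"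
  proof (rule sum_single_crossing_nonneg[OF _ mono nonneg])
    show "0 \<le> (\<Sum>x\<le>n. ?p t' x - ?p t x)"
      using t sum_pmf_eq_1[OF _ set_pmf_binomial_subset] by (simp add: sum_subtractf)
    fix x y
    assume xy: "x \<le> y" "y \<le> n" and "0 < ?p t' x - ?p t x"
    then have "?p t x < ?p t' x"
      by simp
    have "?p t' x * ?p t y \<le> ?p t' y * ?p t x"
      using binomial_pmf_tp2[OF t xy] .
    also have "\<dots> \<le> ?p t' y * ?p t' x"
      using \<open>?p t x < ?p t' x\<close> by (intro mult_left_mono) auto
    finally have "?p t y \<le> ?p t' y"
      using \<open>?p t x < ?p t' x\<close> pmf_nonneg[of "binomial_pmf n t" x]
      by (simp add: mult.commute[of _ "?p t' x"] del: pmf_binomial)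
    then show "0 \<le> ?p t' y - ?p t y"
      by simp
  qed
  then show ?thesis
    by (simp add: power_def algebra_simps sum_subtractf)
qed

lemma test_power_le_if_single_crossing:
  fixes \<phi> \<psi> :: "nat \<Rightarrow> real"
  assumes t: "0 < t0" "t0 < t1" "t1 \<le> 1"
    and crossing: "\<And>x y. x \<le> y \<Longrightarrow> y \<le> n \<Longrightarrow> \<phi> x < \<psi> x \<Longrightarrow> \<phi> y \<le> \<psi> y"
    and level: "power n t0 \<phi> \<le> power n t0 \<psi>"
  shows "power n t1 \<phi> \<le> power n t1 \<psi>"
proof -
  let ?p = "\<lambda>t x. pmf (binomial_pmf n t) x"
  have pos: "0 < ?p t0 x" if "x \<le> n" for x
    using t that by simp
  have nonzero: "?p t0 x \<noteq> 0" if "x \<le> n" for x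
    using pos[OF that] by (intro notI) (simp del: pmf_binomial)
  have "0 \<le> (\<Sum>x\<le>n. ((\<psi> x - \<phi> x) * ?p t0 x) * (?p t1 x / ?p t0 x))"
  proof (rule sum_single_crossing_nonneg)
    show "0 \<le> (\<Sum>x\<le>n. (\<psi> x - \<phi> x) * ?p t0 x)"
      using level by (simp add: power_def algebra_simps sum_subtractf)
    show "0 \<le> ?p t1 x / ?p t0 x" for x
      by simp
    fix x y
    assume xy: "x \<le> y" "y \<le> n"
    have "?p t1 x * ?p t0 y \<le> ?p t1 y * ?p t0 x"
      using t xy by (intro binomial_pmf_tp2) auto
    then show "?p t1 x / ?p t0 x \<le> ?p t1 y / ?p t0 y"
      using pos[of x] pos[of y] xy by (simp add: frac_le_eq divide_le_0_iff del: pmf_binomial)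
    assume "0 < (\<psi> x - \<phi> x) * ?p t0 x"
    then have "\<phi> y \<le> \<psi> y"
      using crossing xy pos[of x] by (simp add: zero_less_mult_iff)
    then show "0 \<le> (\<psi> y - \<phi> y) * ?p t0 y"
      by simp
  qed
  also have "\<dots> = (\<Sum>x\<le>n. (\<psi> x - \<phi> x) * ?p t1 x)"
    by (intro sum.cong refl) (simp add: nonzero del: pmf_binomial)
  finally show ?thesis
    by (simp add: power_def algebra_simps sum_subtractf)
qed

section \<open>Differentially private tests\<close>

lemma DP_tests_add_one_le:
  assumes "\<phi> \<in> DP_tests n \<epsilon> \<delta>" "x < n"
  shows "\<phi> (x + 1) \<le> dp_bound (exp (- \<epsilon>)) \<delta> (\<phi> x)"
proof -
  have "\<phi> (x + 1) \<le> 1" "\<phi> (x + 1) \<le> exp \<epsilon> * \<phi> x + \<delta>"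
    and "1 - \<phi> x - \<delta> \<le> exp \<epsilon> * (1 - \<phi> (x + 1))"
    using assms by (auto simp: DP_tests_def is_test_def)
  moreover from this(3)
  have "exp (- \<epsilon>) * (1 - \<phi> x - \<delta>) \<le> exp (- \<epsilon>) * (exp \<epsilon> * (1 - \<phi> (x + 1)))"
    by (rule mult_left_mono) simp
  ultimately show ?thesis
    by (simp add: dp_bound_def exp_minus field_simps)
qed

lemma mono_test_in_DP_tests:
  assumes test: "is_test n \<phi>" and mono: "\<And>x. x < n \<Longrightarrow> \<phi> x \<le> \<phi> (x + 1)"
    and "0 \<le> \<epsilon>" "0 \<le> \<delta>"
    and step: "\<And>x. x < n \<Longrightarrow> \<phi> (x + 1) \<le> dp_bound (exp (- \<epsilon>)) \<delta> (\<phi> x)"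
  shows "\<phi> \<in> DP_tests n \<epsilon> \<delta>"
proof -
  have "\<phi> x \<le> exp \<epsilon> * \<phi> (x + 1) + \<delta> \<and> \<phi> (x + 1) \<le> exp \<epsilon> * \<phi> x + \<delta> \<and>
      1 - \<phi> x \<le> exp \<epsilon> * (1 - \<phi> (x + 1)) + \<delta> \<and> 1 - \<phi> (x + 1) \<le> exp \<epsilon> * (1 - \<phi> x) + \<delta>"
    if "x < n" for x
  proof -
    let ?u = "\<phi> x" and ?v = "\<phi> (x + 1)"
    have bounds: "0 \<le> ?u" "?u \<le> 1" "0 \<le> ?v" "?v \<le> 1"
      using test that by (auto simp: is_test_def)
    have "1 \<le> exp \<epsilon>"
      using \<open>0 \<le> \<epsilon>\<close> by simp
    then have "?v \<le> exp \<epsilon> * ?v" "1 - ?u \<le> exp \<epsilon> * (1 - ?u)"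
      using bounds by (simp_all add: mult_le_cancel_right1)
    moreover have "?v \<le> exp \<epsilon> * ?u + \<delta>" and v_le: "exp (- \<epsilon>) * (1 - ?u - \<delta>) \<le> 1 - ?v"
      using step[OF that] by (simp_all add: dp_bound_def exp_minus field_simps)
    moreover from v_le have "1 - ?u \<le> exp \<epsilon> * (1 - ?v) + \<delta>"
      by (simp add: exp_minus field_simps)
    ultimately show ?thesis
      using mono[OF that] \<open>0 \<le> \<delta>\<close> by linarith
  qed
  with test show ?thesis
    by (simp add: DP_tests_def)
qed

section \<open>The Tulap test\<close>

lemma continuous_antimono_sublevel_set:
  fixes f :: "real \<Rightarrow> real"
  assumes cont: "continuous_on UNIV f" and anti: "\<And>x y. x \<le> y \<Longrightarrow> f y \<le> f x"
    and bot: "(f \<longlongrightarrow> l) at_bot" and top: "(f \<longlongrightarrow> u) at_top" and \<alpha>: "u < \<alpha>" "\<alpha> < l"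
  obtains c where "{z. f z \<le> \<alpha>} = {c..}" "f c = \<alpha>"
proof -
  obtain z1 where z1: "\<And>z. z \<le> z1 \<Longrightarrow> \<alpha> < f z"
    using order_tendstoD(1)[OF bot \<alpha>(2)] by (auto simp: eventually_at_bot_linorder)
  obtain z2 where z2: "\<And>z. z2 \<le> z \<Longrightarrow> f z < \<alpha>"
    using order_tendstoD(2)[OF top \<alpha>(1)] by (auto simp: eventually_at_top_linorder)
  define S where "S = {z. f z \<le> \<alpha>}"
  have "max z1 z2 \<in> S"
    using z2 by (simp add: S_def less_imp_le)
  moreover have bdd: "bdd_below S"
    unfolding S_def
    by (intro bdd_belowI[of _ z1]) (metis mem_Collect_eq linorder_le_cases not_le z1)
  moreover have "closed S"
    unfolding S_def using cont by (intro closed_Collect_le continuous_intros) auto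
  ultimately have "Inf S \<in> S"
    by (intro closed_contains_Inf) auto
  have S_eq: "S = {Inf S..}"
  proof
    show "S \<subseteq> {Inf S..}"
      using bdd by (auto intro: cInf_lower)
    show "{Inf S..} \<subseteq> S"
      using \<open>Inf S \<in> S\<close> anti by (force simp: S_def intro: order.trans)
  qed
  obtain c' where "f c' = \<alpha>"
    using IVT2[of f "max z1 z2" \<alpha> "min z1 z2"] z1 z2 cont
    by (force simp: continuous_on_eq_continuous_at less_imp_le)
  then have "Inf S \<le> c'"
    using S_eq by (auto simp: S_def)
  then have "\<alpha> \<le> f (Inf S)"
    using anti \<open>f c' = \<alpha>\<close> by force
  with \<open>Inf S \<in> S\<close> have "f (Inf S) = \<alpha>"
    by (simp add: S_def)
  with S_eq show thesis
    unfolding S_def by (rule that)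
qed

lemma
  fixes H :: "real \<Rightarrow> real"
  assumes mono: "\<And>x y. x \<le> y \<Longrightarrow> H x \<le> H y" and cont: "continuous_on UNIV H"
    and bot: "(H \<longlongrightarrow> 0) at_bot" and top: "(H \<longlongrightarrow> 1) at_top"
  shows real_distribution_interval_measure_continuous: "real_distribution (interval_measure H)"
    and measure_interval_measure_atLeast: "measure (interval_measure H) {c..} = 1 - H c"
proof -
  have right_cont: "continuous (at_right a) H" for a
    using cont by (simp add: continuous_on_eq_continuous_at continuous_at_imp_continuous_at_within)
  then show "real_distribution (interval_measure H)"
    using mono bot top by (intro real_distribution_interval_measure)
  then interpret real_distribution "interval_measure H" .
  have "measure (interval_measure H) {c<..} = 1 - H c"
    using prob_compl[of "{..c}"] measure_interval_measure_Iic[OF mono right_cont bot]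
    by (simp add: Compl_eq_Diff_UNIV[symmetric])
  moreover have "emeasure (interval_measure H) {c..c} = 0"
    using emeasure_interval_measure_Icc[of c c H] mono cont by simp
  then have "{c} \<in> null_sets (interval_measure H)"
    by (simp add: null_sets_def)
  moreover have "{c..} = {c<..} \<union> {c}"
    by auto
  ultimately show "measure (interval_measure H) {c..} = 1 - H c"
    using measure_Un_null_set[of "{c<..}" "interval_measure H" "{c}"] by (simp del: Un_insert_right)
qed

lemma Z_prob_eq_power: "Z_prob n \<theta> b q A = power n \<theta> (\<lambda>x. measure (tulap_measure (real x) b q) A)"
  by (simp add: Z_prob_def power_def)

locale tulap_mechanism =
  fixes \<epsilon> \<delta> b q :: real
  assumes eps_pos: "0 < \<epsilon>" and delta_nonneg: "0 \<le> \<delta>"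
    and b_def: "b = exp (- \<epsilon>)"
    and q_def: "q = 2 * \<delta> * b / (1 - b + 2 * \<delta> * b)"
begin

lemma b_bounds: "0 < b" "b < 1"
  using eps_pos by (simp_all add: b_def)

lemma q_denominator_pos: "0 < 1 - b + 2 * \<delta> * b"
  using b_bounds delta_nonneg by (intro add_pos_nonneg) auto

lemma q_bounds: "0 \<le> q" "q < 1"
  using b_bounds delta_nonneg q_denominator_pos by (simp_all add: q_def divide_less_eq)

lemma delta_eq: "\<delta> = q * (1 - b) / (2 * b * (1 - q))"
proof -
  define D where "D = 1 - b + 2 * \<delta> * b"
  have nz: "b \<noteq> 0" "1 - b \<noteq> 0" "D \<noteq> 0"
    using b_bounds q_denominator_pos by (auto simp: D_def)
  have q_D: "q = 2 * \<delta> * b / D"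
    by (simp add: q_def D_def)
  then have "1 - q = (1 - b) / D"
    using nz by (simp add: field_simps D_def)
  with q_D have
    "q * (1 - b) / (2 * b * (1 - q)) = (2 * \<delta> * b / D) * (1 - b) / (2 * b * ((1 - b) / D))"
    by simp
  also have "\<dots> = \<delta>"
    using nz by (simp add: field_simps)
  finally show ?thesis ..
qed

lemma tulap_cdf_eq: "tulap_cdf 0 b q t = clamp01 ((tulap0_cdf 0 b t - q/2) / (1 - q))"
  using q_bounds by (rule tulap_cdf_eq_clamp01)

lemma tulap_cdf_mono: "s \<le> t \<Longrightarrow> tulap_cdf 0 b q s \<le> tulap_cdf 0 b q t"
  unfolding tulap_cdf_eq using q_bounds tulap0_cdf_mono[OF b_bounds]
  by (intro clamp01_mono divide_right_mono diff_right_mono) auto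

lemma tulap_cdf_bounds: "0 \<le> tulap_cdf 0 b q t" "tulap_cdf 0 b q t \<le> 1"
  by (simp_all add: tulap_cdf_eq clamp01_def)

lemma tulap_cdf_minus: "tulap_cdf 0 b q (- t) = 1 - tulap_cdf 0 b q t"
proof -
  have "(tulap0_cdf 0 b (- t) - q/2) / (1 - q) = 1 - (tulap0_cdf 0 b t - q/2) / (1 - q)"
    using q_bounds by (simp add: tulap0_cdf_minus[OF b_bounds] field_simps)
  then show ?thesis
    by (simp add: tulap_cdf_eq clamp01_def)
qed

lemma continuous_tulap_cdf: "continuous_on UNIV (tulap_cdf 0 b q)"
  unfolding tulap_cdf_eq clamp01_def
  using continuous_tulap0_cdf[OF b_bounds] q_bounds by (intro continuous_intros) auto

lemma isCont_tulap_cdf: "isCont (tulap_cdf 0 b q) t"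
  using continuous_tulap_cdf by (simp add: continuous_on_eq_continuous_at)

lemma tulap_cdf_tendsto_at_bot: "(tulap_cdf 0 b q \<longlongrightarrow> 0) at_bot"
proof -
  have "((\<lambda>t. clamp01 ((tulap0_cdf 0 b t - q/2) / (1 - q)))
      \<longlongrightarrow> clamp01 ((0 - q/2) / (1 - q))) at_bot"
    unfolding clamp01_def using q_bounds
    by (intro tendsto_intros tulap0_cdf_tendsto_at_bot[OF b_bounds]) auto
  moreover have "(0 - q/2) / (1 - q) \<le> 0"
    using q_bounds by (simp add: divide_nonpos_pos)
  then have "clamp01 ((0 - q/2) / (1 - q)) = 0"
    by (simp add: clamp01_def)
  ultimately show ?thesis
    by (simp add: tulap_cdf_eq[abs_def])
qed

lemma tulap_cdf_tendsto_at_top: "(tulap_cdf 0 b q \<longlongrightarrow> 1) at_top"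
proof -
  have "((\<lambda>t. tulap_cdf 0 b q (- t)) \<longlongrightarrow> 0) at_top"
    by (rule filterlim_compose[OF tulap_cdf_tendsto_at_bot]) real_asymp
  then have "((\<lambda>t. 1 - tulap_cdf 0 b q (- t)) \<longlongrightarrow> 1 - 0) at_top"
    by (intro tendsto_intros)
  then show ?thesis
    by (simp add: tulap_cdf_minus)
qed

lemma
  shows tulap_cdf_add_one_le: "tulap_cdf 0 b q (t + 1) \<le> dp_bound b \<delta> (tulap_cdf 0 b q t)"
    and tulap_cdf_add_one_eq:
      "0 < tulap_cdf 0 b q t \<Longrightarrow> tulap_cdf 0 b q (t + 1) = dp_bound b \<delta> (tulap_cdf 0 b q t)"
proof -
  define A where "A t = (tulap0_cdf 0 b t - q/2) / (1 - q)" for t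
  have cdf_A: "tulap_cdf 0 b q t = clamp01 (A t)" for t
    by (simp add: tulap_cdf_eq A_def)
  have "A (t + 1) = min ((tulap0_cdf 0 b t / b - q/2) / (1 - q))
                        ((1 - b * (1 - tulap0_cdf 0 b t) - q/2) / (1 - q))"
    unfolding A_def tulap0_cdf_add_one[OF b_bounds] min_diff_distrib_left min_divide_distrib_right
    using q_bounds by simp
  also have "(tulap0_cdf 0 b t / b - q/2) / (1 - q) = A t / b + \<delta>"
    using b_bounds q_bounds delta_eq by (simp add: A_def field_simps)
  also have "(1 - b * (1 - tulap0_cdf 0 b t) - q/2) / (1 - q) = 1 - b * (1 - A t - \<delta>)"
    using b_bounds q_bounds delta_eq by (simp add: A_def field_simps)
  finally have step: "A (t + 1) = min (A t / b + \<delta>) (1 - b * (1 - A t - \<delta>))" .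
  show "tulap_cdf 0 b q (t + 1) \<le> dp_bound b \<delta> (tulap_cdf 0 b q t)"
    unfolding cdf_A step using b_bounds delta_nonneg by (rule clamp01_dp_step_le)
  assume "0 < tulap_cdf 0 b q t"
  then have "0 \<le> A t"
    by (simp add: cdf_A clamp01_def)
  with b_bounds delta_nonneg show "tulap_cdf 0 b q (t + 1) = dp_bound b \<delta> (tulap_cdf 0 b q t)"
    unfolding cdf_A step by (rule clamp01_dp_step_eq)
qed

lemma
  shows real_distribution_tulap_measure: "real_distribution (tulap_measure (of_int j) b q)"
    and measure_tulap_measure_atLeast:
      "measure (tulap_measure (of_int j) b q) {c..} = tulap_cdf 0 b q (of_int j - c)"
proof -
  let ?H = "\<lambda>x. tulap_cdf 0 b q (x - of_int j)"
  have eq: "tulap_measure (of_int j) b q = interval_measure ?H"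
    by (simp add: tulap_measure_def tulap_cdf_of_int_shift[abs_def])
  have mono: "?H x \<le> ?H y" if "x \<le> y" for x y
    using that by (intro tulap_cdf_mono) simp
  have cont: "continuous_on UNIV ?H"
    by (intro continuous_on_compose2[OF continuous_tulap_cdf] continuous_intros) auto
  have bot: "(?H \<longlongrightarrow> 0) at_bot"
    by (rule filterlim_compose[OF tulap_cdf_tendsto_at_bot]) real_asymp
  have top: "(?H \<longlongrightarrow> 1) at_top"
    by (rule filterlim_compose[OF tulap_cdf_tendsto_at_top]) real_asymp
  show "real_distribution (tulap_measure (of_int j) b q)"
    unfolding eq using mono cont bot top by (rule real_distribution_interval_measure_continuous)
  have "measure (tulap_measure (of_int j) b q) {c..} = 1 - ?H c"
    unfolding eq using mono cont bot top by (rule measure_interval_measure_atLeast)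
  then show "measure (tulap_measure (of_int j) b q) {c..} = tulap_cdf 0 b q (of_int j - c)"
    using tulap_cdf_minus[of "c - of_int j"] by simp
qed

lemma tulap_pvalue_eq_sum:
  assumes "0 \<le> \<theta>" "\<theta> \<le> 1"
  shows "tulap_pvalue n \<theta> b q z
    = (\<Sum>x\<le>n. tulap_cdf 0 b q (real x - z) * pmf (binomial_pmf n \<theta>) x)"
proof -
  let ?X = "measure_pmf (binomial_pmf n \<theta>)" and ?N = "tulap_measure 0 b q"
  let ?S = "{(x, t). z \<le> real x + t} :: (nat \<times> real) set"
  interpret N: real_distribution ?N
    using real_distribution_tulap_measure[of 0] by simp
  have "?S = (\<Union>x. {x} \<times> {z - real x..})"
    by auto
  then have S: "?S \<in> sets (?X \<Otimes>\<^sub>M ?N)"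
    by (auto intro!: sets.countable_UN'' pair_measureI)
  have "emeasure (?X \<Otimes>\<^sub>M ?N) ?S = (\<integral>\<^sup>+x. emeasure ?N (Pair x -` ?S) \<partial>?X)"
    using S by (rule N.emeasure_pair_measure_alt)
  also have "\<dots> = (\<integral>\<^sup>+x. ennreal (tulap_cdf 0 b q (real x - z)) \<partial>?X)"
  proof (rule nn_integral_cong)
    fix x :: nat
    have "Pair x -` ?S = {z - real x..}"
      by auto
    then show "emeasure ?N (Pair x -` ?S) = ennreal (tulap_cdf 0 b q (real x - z))"
      using measure_tulap_measure_atLeast[of 0 "z - real x"] by (simp add: N.emeasure_eq_measure)
  qed
  also have "\<dots> = (\<Sum>x\<le>n. ennreal (tulap_cdf 0 b q (real x - z)) * pmf (binomial_pmf n \<theta>) x)"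
    using set_pmf_binomial_subset[OF assms] by (intro nn_integral_measure_pmf_support) auto
  also have "\<dots> = ennreal (\<Sum>x\<le>n. tulap_cdf 0 b q (real x - z) * pmf (binomial_pmf n \<theta>) x)"
    using tulap_cdf_bounds by (simp add: ennreal_mult[symmetric] sum_ennreal)
  finally show ?thesis
    unfolding tulap_pvalue_def measure_def
    using tulap_cdf_bounds by (simp add: sum_nonneg)
qed

lemma tulap_pvalue_bounds: "0 \<le> tulap_pvalue n \<theta> b q z \<and> tulap_pvalue n \<theta> b q z \<le> 1"
proof -
  interpret prob_space "measure_pmf (binomial_pmf n \<theta>) \<Otimes>\<^sub>M tulap_measure 0 b q"
    using real_distribution_tulap_measure[of 0]
    by (intro prob_space_pair prob_space_measure_pmf) (simp add: real_distribution_def)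
  show ?thesis
    by (simp add: tulap_pvalue_def)
qed

lemma tulap_pvalue_sublevel_set:
  assumes "0 < \<theta>0" "\<theta>0 < 1" "0 < \<alpha>" "\<alpha> < 1"
  obtains c where "{z. tulap_pvalue n \<theta>0 b q z \<le> \<alpha>} = {c..}"
    and "power n \<theta>0 (\<lambda>x. tulap_cdf 0 b q (real x - c)) = \<alpha>"
proof -
  let ?p = "tulap_pvalue n \<theta>0 b q" and ?w = "pmf (binomial_pmf n \<theta>0)"
  have p_eq: "?p = (\<lambda>z. \<Sum>x\<le>n. tulap_cdf 0 b q (real x - z) * ?w x)"
    using assms by (simp add: fun_eq_iff tulap_pvalue_eq_sum)
  have "continuous_on UNIV ?p"
    unfolding p_eq continuous_on_eq_continuous_at[OF open_UNIV]
    by (intro ballI continuous_intros isCont_o2[OF _ isCont_tulap_cdf])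
  moreover have "?p z' \<le> ?p z" if "z \<le> z'" for z z'
    unfolding p_eq using that by (intro sum_mono mult_right_mono tulap_cdf_mono) auto
  moreover have "(?p \<longlongrightarrow> (\<Sum>x\<le>n. 1 * ?w x)) at_bot"
    unfolding p_eq
    by (intro tendsto_intros filterlim_compose[OF tulap_cdf_tendsto_at_top]) real_asymp
  moreover have "(?p \<longlongrightarrow> (\<Sum>x\<le>n. 0 * ?w x)) at_top"
    unfolding p_eq
    by (intro tendsto_intros filterlim_compose[OF tulap_cdf_tendsto_at_bot]) real_asymp
  moreover have "(\<Sum>x\<le>n. 1 * ?w x) = 1"
    using assms by (simp add: sum_pmf_eq_1 set_pmf_binomial_subset del: pmf_binomial)
  ultimately obtain c where "{z. ?p z \<le> \<alpha>} = {c..}" "?p c = \<alpha>"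
    using assms continuous_antimono_sublevel_set[of ?p 1 0 \<alpha>] by auto
  moreover have "power n \<theta>0 (\<lambda>x. tulap_cdf 0 b q (real x - c)) = ?p c"
    by (simp add: p_eq power_def mult.commute)
  ultimately show thesis
    using that by simp
qed

lemma tulap_test_in_DP_tests: "(\<lambda>x. tulap_cdf 0 b q (real x - c)) \<in> DP_tests n \<epsilon> \<delta>"
proof (rule mono_test_in_DP_tests)
  show "is_test n (\<lambda>x. tulap_cdf 0 b q (real x - c))"
    by (simp add: is_test_def tulap_cdf_bounds)
  show "tulap_cdf 0 b q (real x - c) \<le> tulap_cdf 0 b q (real (x + 1) - c)" for x
    by (intro tulap_cdf_mono) simp
  show "tulap_cdf 0 b q (real (x + 1) - c)
      \<le> dp_bound (exp (- \<epsilon>)) \<delta> (tulap_cdf 0 b q (real x - c))" for x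
    using tulap_cdf_add_one_le[of "real x - c"] by (simp add: b_def algebra_simps)
qed (use eps_pos delta_nonneg in auto)

lemma DP_test_le_tulap_test:
  assumes \<phi>: "\<phi> \<in> DP_tests n \<epsilon> \<delta>" and "x \<le> y" "y \<le> n"
    and less: "\<phi> x < tulap_cdf 0 b q (real x - c)"
  shows "\<phi> y \<le> tulap_cdf 0 b q (real y - c)"
  using \<open>x \<le> y\<close> \<open>y \<le> n\<close>
proof (induction y rule: dec_induct)
  case base
  with less show ?case
    by simp
next
  case (step m)
  have "0 \<le> \<phi> x"
    using \<phi> \<open>x \<le> y\<close> \<open>y \<le> n\<close> by (auto simp: DP_tests_def is_test_def)
  also have "\<phi> x < tulap_cdf 0 b q (real x - c)"
    by (rule less)
  also have "\<dots> \<le> tulap_cdf 0 b q (real m - c)"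
    using step.hyps by (intro tulap_cdf_mono) simp
  finally have pos: "0 < tulap_cdf 0 b q (real m - c)" .
  have "\<phi> (m + 1) \<le> dp_bound b \<delta> (\<phi> m)"
    using DP_tests_add_one_le[OF \<phi>, of m] step by (simp add: b_def)
  also have "\<dots> \<le> dp_bound b \<delta> (tulap_cdf 0 b q (real m - c))"
    using step b_bounds by (intro dp_bound_mono) auto
  also have "\<dots> = tulap_cdf 0 b q (real (m + 1) - c)"
    using tulap_cdf_add_one_eq[OF pos] by (simp add: algebra_simps)
  finally show ?case
    by simp
qed

lemma tulap_test_UMP:
  assumes \<theta>0: "0 < \<theta>0" "\<theta>0 < 1" and \<alpha>: "0 < \<alpha>" "\<alpha> < 1"
  shows "is_UMP n {0..\<theta>0} {\<theta>0<..1} \<alpha> (DP_tests n \<epsilon> \<delta>)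
           (\<lambda>x. measure (tulap_measure (real x) b q) {z. tulap_pvalue n \<theta>0 b q z \<le> \<alpha>})"
proof -
  obtain c where sublevel: "{z. tulap_pvalue n \<theta>0 b q z \<le> \<alpha>} = {c..}"
    and size: "power n \<theta>0 (\<lambda>x. tulap_cdf 0 b q (real x - c)) = \<alpha>"
    using tulap_pvalue_sublevel_set[OF assms] .
  define \<psi> where "\<psi> x = tulap_cdf 0 b q (real x - c)" for x
  have size_\<psi>: "power n \<theta>0 \<psi> = \<alpha>"
    using size by (simp add: \<psi>_def[abs_def])
  have test_eq:
    "(\<lambda>x. measure (tulap_measure (real x) b q) {z. tulap_pvalue n \<theta>0 b q z \<le> \<alpha>}) = \<psi>"
    using measure_tulap_measure_atLeast[of "int _" c] by (simp add: fun_eq_iff sublevel \<psi>_def)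
  have level: "power n \<theta> \<psi> \<le> \<alpha>" if "\<theta> \<in> {0..\<theta>0}" for \<theta>
  proof -
    have "power n \<theta> \<psi> \<le> power n \<theta>0 \<psi>"
      using that \<theta>0 by (intro test_power_mono) (auto simp: \<psi>_def tulap_cdf_mono tulap_cdf_bounds)
    with size_\<psi> show ?thesis
      by simp
  qed
  have most_powerful: "power n \<theta>1 \<phi> \<le> power n \<theta>1 \<psi>"
    if \<phi>: "\<phi> \<in> DP_tests n \<epsilon> \<delta>" and level_\<phi>: "\<forall>\<theta>\<in>{0..\<theta>0}. power n \<theta> \<phi> \<le> \<alpha>"
      and \<theta>1: "\<theta>1 \<in> {\<theta>0<..1}" for \<phi> \<theta>1
  proof (rule test_power_le_if_single_crossing)
    show "0 < \<theta>0" "\<theta>0 < \<theta>1" "\<theta>1 \<le> 1"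
      using \<theta>0 \<theta>1 by auto
    show "\<phi> y \<le> \<psi> y" if "x \<le> y" "y \<le> n" "\<phi> x < \<psi> x" for x y
      using DP_test_le_tulap_test[OF \<phi> that[unfolded \<psi>_def]] by (simp add: \<psi>_def)
    show "power n \<theta>0 \<phi> \<le> power n \<theta>0 \<psi>"
      using level_\<phi> size_\<psi> \<theta>0 by simp
  qed
  show ?thesis
    unfolding is_UMP_def test_eq
    using tulap_test_in_DP_tests[of c, folded \<psi>_def[abs_def]] level most_powerful by auto
qed

lemma tulap_pvalue_is_pvalue:
  assumes "0 < \<theta>0" "\<theta>0 < 1"
  shows "is_pvalue n b q {0..\<theta>0} (tulap_pvalue n \<theta>0 b q)"
  using tulap_pvalue_bounds tulap_test_UMP[OF assms]
  by (auto simp: is_pvalue_def Z_prob_eq_power is_UMP_def)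

end

theorem theorem5:
  fixes \<epsilon> \<delta> \<theta>0 b q :: real and n :: nat
  assumes "\<epsilon> > 0" and "\<delta> \<ge> 0" and "n \<ge> 1"
    and "0 < \<theta>0" and "\<theta>0 < 1"
    and "b = exp (- \<epsilon>)"
    and "q = 2 * \<delta> * b / (1 - b + 2 * \<delta> * b)"
  shows "is_pvalue n b q {0..\<theta>0} (tulap_pvalue n \<theta>0 b q)
    \<and> (\<forall>\<alpha>. 0 < \<alpha> \<and> \<alpha> < 1 \<longrightarrow>
           is_UMP n {0..\<theta>0} {\<theta>0<..1} \<alpha> (DP_tests n \<epsilon> \<delta>)
             (\<lambda>x. measure (tulap_measure (real x) b q) {z. tulap_pvalue n \<theta>0 b q z \<le> \<alpha>}))
    \<and> (\<forall>z. tulap_pvalue n \<theta>0 b q z =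
           (\<Sum>x\<le>n. tulap_cdf 0 b q (real x - z) * real (n choose x) * \<theta>0 ^ x * (1 - \<theta>0) ^ (n - x)))"
proof -
  interpret tulap_mechanism \<epsilon> \<delta> b q
    using assms by unfold_locales
  show ?thesis
    using assms tulap_pvalue_is_pvalue tulap_test_UMP tulap_pvalue_eq_sum
    by (simp add: mult.assoc)
qed

end
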